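(* If the distributed theory $\mathcal T$ is permaconsistent, then $D^*_{\mathcal T}((\bot_{\mathcal A},\top_{\mathcal A}))$ is universally consistent, where $\bot_{\mathcal A}=(\bot)_{A\in\mathcal A}$ and $\top_{\mathcal A}=(\top)_{A\in\mathcal A}$.
   Context: Standing setup (dAEL). $\Sigma=\Sigma_o\uplus\Sigma_s$ is a first-order vocabulary (objective and subjective symbols). A nonempty domain $D$ and a $\Sigma_o$-structure $I_o$ with domain $D$ are fixed, as is a set of agents $\mathcal{A}\subseteq D$. For each $A\in\mathcal{A}$ there is a constant $A\in\Sigma_o$ with $A^{I_o}=A$, and $\Sigma_o$ contains a unary predicate $\mathrm{Apred}$ with $\mathrm{Apred}^{I_o}=\mathcal{A}$. "Structure" means a $\Sigma$-structure with domain $D$ that agrees with $I_o$ on $\Sigma_o$. Formulas of dAEL are built from atoms $P(\bar t)$ ($P\in\Sigma$ or equality) using $\wedge,\neg,\forall x$, and the modal rule: if $\varphi$ is a formula and $t$ a term then $K_t\varphi$ is a formula ($\vee,\Rightarrow,\Leftrightarrow,\exists$ are the usual abbreviations). Truth values are $\mathbf t,\mathbf f,\mathbf u$ with truth order $\mathbf f<_t\mathbf u<_t\mathbf t$; $\mathbf t^{-1}=\mathbf f$, $\mathbf f^{-1}=\mathbf t$, $\mathbf u^{-1}=\mathbf u$. A possible world structure (PWS) is a set of structures; $Q_1\le_K Q_2$ iff $Q_2\subseteq Q_1$; $\bot$ denotes the set of all structures and $\top=\emptyset$. A distributed possible world structure (DPWS) is a family $\mathcal Q=(\mathcal Q_A)_{A\in\mathcal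 A}$ of PWSs, ordered pointwise by $\le_K$. A distributed belief pair (DBP) is a pair $\mathcal B=(\mathcal B^c,\mathcal B^l)$ of DPWSs. Three-valued value $\varphi^{\mathcal B,I,a}$ for any pair $\mathcal B$ of DPWSs: atoms get their two-valued value in $I$; $\neg$ is interpreted by ${}^{-1}$, and $\wedge$, $\forall$ by $\le_t$-greatest lower bound (Kleene); $(K_t\varphi)^{\mathcal B,I,a}$ is $\mathbf t$ if $t^{I,a}\in\mathcal A$ and $\varphi^{\mathcal B,J,a}=\mathbf t$ for all $J\in\mathcal B^c_{t^{I,a}}$; it is $\mathbf f$ if $t^{I,a}\notin\mathcal A$ or $\varphi^{\mathcal B,J,a}=\mathbf f$ for some $J\in\mathcal B^l_{t^{I,a}}$; and $\mathbf u$ otherwise. For sentences the assignment is omitted, and the value of a set of sentences is the $\le_t$-glb of the values of its members. A distributed theory is a family $\mathcal T=(\mathcal T_A)_{A\in\mathcal A}$ of sets of dAEL sentences. $D^*_{\mathcal T}(\mathcal B)=(D^c_{\mathcal T}(\mathcal B),D^l_{\mathcal T}(\mathcal B))$ with $D^c_{\mathcal T}(\mathcal B)_A=\{I:\mathcal T_A^{\mathcal B,I}\ne\mathbf f\}$ and $D^l_{\mathcal T}(\mathcal B)_A=\{I:\mathcal T_A^{\mathcal B,I}=\mathbf t\}$. Universal consistency: a DPWS $\mathcal Q$ is universally consistent if $\mathcal Q_A\neq\emptyset$ for all $A\in\mathcal A$; a DBP $\mathcal B$ is universally consistent if $\mathcal B^l$ is. Permaconsistency: $\mathcal T$ is permaconsistent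 if for each $A\in\mathcal A$ and each theory $T'$ obtained from $\mathcal T_A$ by replacing each occurrence of a subformula $K_t\varphi$ that is not nested under a modal operator by $\mathbf t$ or by $\mathbf f$ (independently per occurrence), $T'$ has a model that is a structure (i.e. expands $I_o$). *)

theory Defs
  imports Main
begin

datatype 'f trm = Var nat | Fn 'f "'f trm list"

datatype ('f, 'p) fm =
    Atom 'p "'f trm list"
  | Eq "'f trm" "'f trm"
  | Neg "('f, 'p) fm"
  | Conj "('f, 'p) fm" "('f, 'p) fm"
  | All nat "('f, 'p) fm"
  | K "'f trm" "('f, 'p) fm"

fun tvars :: "'f trm \<Rightarrow> nat set" where
  "tvars (Var n) = {n}"
| "tvars (Fn f ts) = (\<Union>t\<in>set ts. tvars t)"

fun fv :: "('f, 'p) fm \<Rightarrow> nat set" where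
  "fv (Atom p ts) = (\<Union>t\<in>set ts. tvars t)"
| "fv (Eq s t) = tvars s \<union> tvars t"
| "fv (Neg \<phi>) = fv \<phi>"
| "fv (Conj \<phi> \<psi>) = fv \<phi> \<union> fv \<psi>"
| "fv (All x \<phi>) = fv \<phi> - {x}"
| "fv (K t \<phi>) = tvars t \<union> fv \<phi>"

definition sentence :: "('f, 'p) fm \<Rightarrow> bool" where
  "sentence \<phi> \<longleftrightarrow> fv \<phi> = {}"

record ('d, 'f, 'p) struc =
  fnI :: "'f \<Rightarrow> 'd list \<Rightarrow> 'd"
  prI :: "'p \<Rightarrow> 'd list \<Rightarrow> bool"

text \<open>A structure is a Sigma-structure agreeing with Io on the objective symbols
(objective function symbols oF, objective predicate symbols oP).\<close>
definition is_struc ::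
  "'f set \<Rightarrow> 'p set \<Rightarrow> ('d, 'f, 'p) struc \<Rightarrow> ('d, 'f, 'p) struc \<Rightarrow> bool" where
  "is_struc oF oP Io I \<longleftrightarrow>
     (\<forall>f\<in>oF. fnI I f = fnI Io f) \<and> (\<forall>p\<in>oP. prI I p = prI Io p)"

fun teval :: "('d, 'f, 'p) struc \<Rightarrow> (nat \<Rightarrow> 'd) \<Rightarrow> 'f trm \<Rightarrow> 'd" where
  "teval I a (Var n) = a n"
| "teval I a (Fn f ts) = fnI I f (map (teval I a) ts)"

datatype tv = TT | FF | UU

fun tv_neg :: "tv \<Rightarrow> tv" where
  "tv_neg TT = FF" | "tv_neg FF = TT" | "tv_neg UU = UU"

text \<open>Greatest lower bound in the truth order f < u < t of a set of truth values.\<close>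
definition tv_glb :: "tv set \<Rightarrow> tv" where
  "tv_glb V = (if FF \<in> V then FF else if UU \<in> V then UU else TT)"

text \<open>A DPWS: a family indexed by agents (values outside the agent set are irrelevant);
a pair of DPWSs is (Bc, Bl).\<close>
type_synonym ('d, 'f, 'p) dpws = "'d \<Rightarrow> ('d, 'f, 'p) struc set"

fun eval :: "'d set \<Rightarrow> ('d, 'f, 'p) dpws \<times> ('d, 'f, 'p) dpws \<Rightarrow> ('d, 'f, 'p) struc
              \<Rightarrow> (nat \<Rightarrow> 'd) \<Rightarrow> ('f, 'p) fm \<Rightarrow> tv" where
  "eval Ag B I a (Atom p ts) = (if prI I p (map (teval I a) ts) then TT else FF)"
| "eval Ag B I a (Eq s t) = (if teval I a s = teval I a t then TT else FF)"
| "eval Ag B I a (Neg \<phi>) = tv_neg (eval Ag B I a \<phi>)"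
| "eval Ag B I a (Conj \<phi> \<psi>) = tv_glb {eval Ag B I a \<phi>, eval Ag B I a \<psi>}"
| "eval Ag B I a (All x \<phi>) = tv_glb ((\<lambda>d. eval Ag B I (a(x := d)) \<phi>) ` UNIV)"
| "eval Ag B I a (K t \<phi>) =
     (let A = teval I a t in
      if A \<in> Ag \<and> (\<forall>J\<in>fst B A. eval Ag B J a \<phi> = TT) then TT
      else if A \<notin> Ag \<or> (\<exists>J\<in>snd B A. eval Ag B J a \<phi> = FF) then FF
      else UU)"

text \<open>Value of a set of sentences (the assignment is irrelevant for sentences).\<close>
definition theory_val :: "'d set \<Rightarrow> ('d, 'f, 'p) dpws \<times> ('d, 'f, 'p) dpws
      \<Rightarrow> ('d, 'f, 'p) struc \<Rightarrow> ('f, 'p) fm set \<Rightarrow> tv" where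
  "theory_val Ag B I T = tv_glb ((\<lambda>\<phi>. eval Ag B I (\<lambda>_. undefined) \<phi>) ` T)"

definition Dc :: "'f set \<Rightarrow> 'p set \<Rightarrow> ('d, 'f, 'p) struc \<Rightarrow> 'd set
      \<Rightarrow> ('d \<Rightarrow> ('f, 'p) fm set) \<Rightarrow> ('d, 'f, 'p) dpws \<times> ('d, 'f, 'p) dpws
      \<Rightarrow> ('d, 'f, 'p) dpws" where
  "Dc oF oP Io Ag T B = (\<lambda>A. {I. is_struc oF oP Io I \<and> theory_val Ag B I (T A) \<noteq> FF})"

definition Dl :: "'f set \<Rightarrow> 'p set \<Rightarrow> ('d, 'f, 'p) struc \<Rightarrow> 'd set
      \<Rightarrow> ('d \<Rightarrow> ('f, 'p) fm set) \<Rightarrow> ('d, 'f, 'p) dpws \<times> ('d, 'f, 'p) dpws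
      \<Rightarrow> ('d, 'f, 'p) dpws" where
  "Dl oF oP Io Ag T B = (\<lambda>A. {I. is_struc oF oP Io I \<and> theory_val Ag B I (T A) = TT})"

definition Dstar where
  "Dstar oF oP Io Ag T B = (Dc oF oP Io Ag T B, Dl oF oP Io Ag T B)"

definition botA :: "'f set \<Rightarrow> 'p set \<Rightarrow> ('d, 'f, 'p) struc \<Rightarrow> ('d, 'f, 'p) dpws" where
  "botA oF oP Io = (\<lambda>A. {I. is_struc oF oP Io I})"

definition topA :: "('d, 'f, 'p) dpws" where
  "topA = (\<lambda>A. {})"

definition univ_consistent_dpws :: "'d set \<Rightarrow> ('d, 'f, 'p) dpws \<Rightarrow> bool" where
  "univ_consistent_dpws Ag Q \<longleftrightarrow> (\<forall>A\<in>Ag. Q A \<noteq> {})"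

definition univ_consistent_dbp ::
  "'d set \<Rightarrow> ('d, 'f, 'p) dpws \<times> ('d, 'f, 'p) dpws \<Rightarrow> bool" where
  "univ_consistent_dbp Ag B \<longleftrightarrow> univ_consistent_dpws Ag (snd B)"

text \<open>Modal-free formulas with truth constants (result of replacing top-level
K-subformulas by t or f), with classical two-valued semantics.\<close>
datatype ('f, 'p) ofm =
    OAtom 'p "'f trm list"
  | OEq "'f trm" "'f trm"
  | ONeg "('f, 'p) ofm"
  | OConj "('f, 'p) ofm" "('f, 'p) ofm"
  | OAll nat "('f, 'p) ofm"
  | OTrue
  | OFalse

fun osat :: "('d, 'f, 'p) struc \<Rightarrow> (nat \<Rightarrow> 'd) \<Rightarrow> ('f, 'p) ofm \<Rightarrow> bool" where
  "osat I a (OAtom p ts) = prI I p (map (teval I a) ts)"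
| "osat I a (OEq s t) = (teval I a s = teval I a t)"
| "osat I a (ONeg \<phi>) = (\<not> osat I a \<phi>)"
| "osat I a (OConj \<phi> \<psi>) = (osat I a \<phi> \<and> osat I a \<psi>)"
| "osat I a (OAll x \<phi>) = (\<forall>d. osat I (a(x := d)) \<phi>)"
| "osat I a OTrue = True"
| "osat I a OFalse = False"

inductive repl :: "('f, 'p) fm \<Rightarrow> ('f, 'p) ofm \<Rightarrow> bool" where
  "repl (Atom p ts) (OAtom p ts)"
| "repl (Eq s t) (OEq s t)"
| "repl \<phi> \<psi> \<Longrightarrow> repl (Neg \<phi>) (ONeg \<psi>)"
| "repl \<phi>1 \<psi>1 \<Longrightarrow> repl \<phi>2 \<psi>2 \<Longrightarrow> repl (Conj \<phi>1 \<phi>2) (OConj \<psi>1 \<psi>2)"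
| "repl \<phi> \<psi> \<Longrightarrow> repl (All x \<phi>) (OAll x \<psi>)"
| "repl (K t \<phi>) OTrue"
| "repl (K t \<phi>) OFalse"

text \<open>Each theory T' obtained from T A is given by a choice r of a replacement
for every sentence of T A; T' = r ` T A. T' must have a model that is a structure.\<close>
definition permaconsistent ::
  "'f set \<Rightarrow> 'p set \<Rightarrow> ('d, 'f, 'p) struc \<Rightarrow> 'd set \<Rightarrow> ('d \<Rightarrow> ('f, 'p) fm set) \<Rightarrow> bool" where
  "permaconsistent oF oP Io Ag T \<longleftrightarrow>
     (\<forall>A\<in>Ag. \<forall>r. (\<forall>\<phi>\<in>T A. repl \<phi> (r \<phi>)) \<longrightarrow>
        (\<exists>I. is_struc oF oP Io I \<and> (\<forall>\<psi>\<in>r ` T A. osat I (\<lambda>_. undefined) \<psi>)))"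

end

theory Submission
  imports Defs
begin

text \<open>Replace every top-level modal subformula by \<open>f\<close> where it occurs positively and
by \<open>t\<close> where it occurs negatively. The resulting modal-free formula is a pessimistic
approximation: whenever it holds classically, the original formula is true under every
pair of DPWSs. Permaconsistency provides, for each agent \<open>A\<close>, a structure satisfying
the approximations of all of \<open>\<T>\<^sub>A\<close>, and this structure then belongs to the liberal
component of \<open>D\<^sup>*\<^sub>\<T>\<close> at \<open>(\<bottom>\<^sub>\<A>, \<top>\<^sub>\<A>)\<close>.\<close>

fun pessimistic_approx :: "bool \<Rightarrow> ('f, 'p) fm \<Rightarrow> ('f, 'p) ofm" where
  "pessimistic_approx pos (Atom p ts) = OAtom p ts"
| "pessimistic_approx pos (Eq s t) = OEq s t"
| "pessimistic_approx pos (Neg \<phi>) = ONeg (pessimistic_approx (\<not> pos) \<phi>)"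
| "pessimistic_approx pos (Conj \<phi> \<psi>) =
     OConj (pessimistic_approx pos \<phi>) (pessimistic_approx pos \<psi>)"
| "pessimistic_approx pos (All x \<phi>) = OAll x (pessimistic_approx pos \<phi>)"
| "pessimistic_approx pos (K t \<phi>) = (if pos then OFalse else OTrue)"

lemma repl_pessimistic_approx: "repl \<phi> (pessimistic_approx pos \<phi>)"
  by (induction \<phi> arbitrary: pos) (auto intro: repl.intros)

lemma tv_glb_eq_TT_iff: "tv_glb V = TT \<longleftrightarrow> (\<forall>v\<in>V. v = TT)"
proof -
  have "v = TT" if "FF \<notin> V" "UU \<notin> V" "v \<in> V" for v
    using that by (cases v) auto
  then show ?thesis
    unfolding tv_glb_def by auto
qed

lemma tv_glb_FF: "FF \<in> V \<Longrightarrow> tv_glb V = FF"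
  unfolding tv_glb_def by simp

lemma tv_neg_eq_iff [simp]:
  "tv_neg v = TT \<longleftrightarrow> v = FF"
  "tv_neg v = FF \<longleftrightarrow> v = TT"
  by (cases v; simp)+

text \<open>Both polarities are proved simultaneously, since negation swaps them.\<close>
lemma eval_pessimistic_approx:
  "(osat I a (pessimistic_approx True \<phi>) \<longrightarrow> eval Ag B I a \<phi> = TT) \<and>
   (\<not> osat I a (pessimistic_approx False \<phi>) \<longrightarrow> eval Ag B I a \<phi> = FF)"
proof (induction \<phi> arbitrary: a)
  case (Conj \<phi>1 \<phi>2)
  show ?case
    using Conj.IH[of a] by (auto simp: tv_glb_eq_TT_iff intro: tv_glb_FF)
next
  case (All x \<phi>)
  show ?case
    using All.IH by (auto simp: tv_glb_eq_TT_iff intro!: tv_glb_FF) (metis rangeI)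
qed simp_all

lemma theory_val_eq_TT_if_approx_holds:
  assumes "\<forall>\<phi>\<in>T. osat I (\<lambda>_. undefined) (pessimistic_approx True \<phi>)"
  shows "theory_val Ag B I T = TT"
  using assms eval_pessimistic_approx
  unfolding theory_val_def tv_glb_eq_TT_iff by blast

lemma permaconsistent_approx_model:
  assumes "permaconsistent oF oP Io Ag T" and "A \<in> Ag"
  obtains I where "is_struc oF oP Io I"
    and "\<forall>\<phi>\<in>T A. osat I (\<lambda>_. undefined) (pessimistic_approx True \<phi>)"
proof -
  have "\<forall>\<phi>\<in>T A. repl \<phi> (pessimistic_approx True \<phi>)"
    using repl_pessimistic_approx by blast
  with assms obtain I where "is_struc oF oP Io I"
    and "\<forall>\<psi>\<in>pessimistic_approx True ` T A. osat I (\<lambda>_. undefined) \<psi>"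
    unfolding permaconsistent_def by blast
  then show ?thesis
    using that by blast
qed

theorem mainTheorem7:
  fixes oF :: "'f set" and oP :: "'p set" and Io :: "('d, 'f, 'p) struc"
    and Ag :: "'d set" and T :: "'d \<Rightarrow> ('f, 'p) fm set"
  assumes agent_consts: "\<forall>A\<in>Ag. \<exists>c\<in>oF. fnI Io c [] = A"
    and Apred: "\<exists>P\<in>oP. \<forall>d. prI Io P [d] = (d \<in> Ag)"
    and sentences: "\<forall>A\<in>Ag. \<forall>\<phi>\<in>T A. sentence \<phi>"
    and perma: "permaconsistent oF oP Io Ag T"
  shows "univ_consistent_dbp Ag (Dstar oF oP Io Ag T (botA oF oP Io, topA))"
proof -
  have "Dl oF oP Io Ag T (botA oF oP Io, topA) A \<noteq> {}" if "A \<in> Ag" for A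
  proof -
    obtain I where "is_struc oF oP Io I"
      and "\<forall>\<phi>\<in>T A. osat I (\<lambda>_. undefined) (pessimistic_approx True \<phi>)"
      using permaconsistent_approx_model[OF perma \<open>A \<in> Ag\<close>] .
    then show ?thesis
      unfolding Dl_def using theory_val_eq_TT_if_approx_holds by blast
  qed
  then show ?thesis
    unfolding univ_consistent_dbp_def univ_consistent_dpws_def Dstar_def by simp
qed

end
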